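(* Let $K:X\times X\to\mathbb{R}$ be positive definite and $S\subset X$ a countable subset with $\delta_x\in\mathscr{H}(K^{(S)})$ for all $x\in S$, where $K^{(S)}=K|_{S\times S}$. Let $\Delta$ be the graph Laplacian $(\Delta h)(x)=\langle\delta_x,h\rangle_{\mathscr{H}(K^{(S)})}$ for $x\in S$, $h\in\mathscr{H}(K^{(S)})$. For finite $F\subset S$ let $K_F=(K(x,y))_{x,y\in F}$ and let $P_F$ be the orthogonal projection of $\mathscr{H}(K^{(S)})$ onto $\mathrm{span}\{K^{(S)}(\cdot,y):y\in F\}$. Then, for every $h\in\mathscr{H}(K^{(S)})$: (1) $\|h\|^2_{\mathscr{H}(K^{(S)})}=\sup_F\langle h|_F,(\Delta P_Fh)|_F\rangle_{\ell^2(F)}=\sup_F\langle h|_F,K_F^{-1}(h|_F)\rangle_{\ell^2(F)}$, the suprema over all finite $F\subset S$; (2) for every finite $F\subset S$ and $x\in F$, $(\Delta(P_Fh))(x)=(K_F^{-1}(h|_F))(x)$; (3) for every finite $F\subset S$, $K_F\big((\Delta P_Fh)|_F\big)=h|_F$.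
   Context: $\delta_x$ is the function on $S$ equal to $1$ at $x$ and $0$ elsewhere; $\mathscr{H}(K^{(S)})$ is the reproducing kernel Hilbert space of $K^{(S)}$ on $S$ (completion of the span of $K^{(S)}(\cdot,s)$, $\langle K^{(S)}(\cdot,s),K^{(S)}(\cdot,t)\rangle=K(s,t)$, $\langle K^{(S)}(\cdot,s),h\rangle=h(s)$). Under the hypothesis, each $K_F$ is invertible. *)

theory Defs
  imports "HOL-Analysis.Analysis"
begin

definition pos_def_kernel :: "('a \<Rightarrow> 'a \<Rightarrow> real) \<Rightarrow> bool" where
  "pos_def_kernel K \<longleftrightarrow> (\<forall>x y. K x y = K y x) \<and>
     (\<forall>F c. finite F \<longrightarrow> (\<Sum>x\<in>F. \<Sum>y\<in>F. c x * c y * K x y) \<ge> 0)"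

definition kfun :: "('a \<Rightarrow> 'a \<Rightarrow> real) \<Rightarrow> 'a set \<Rightarrow> 'a set \<times> ('a \<Rightarrow> real) \<Rightarrow> 'a \<Rightarrow> real" where
  "kfun K S a = (\<lambda>x. if x \<in> S then (\<Sum>y\<in>fst a. snd a y * K x y) else 0)"

definition kip :: "('a \<Rightarrow> 'a \<Rightarrow> real) \<Rightarrow> 'a set \<times> ('a \<Rightarrow> real) \<Rightarrow> 'a set \<times> ('a \<Rightarrow> real) \<Rightarrow> real" where
  "kip K a b = (\<Sum>y\<in>fst a. \<Sum>z\<in>fst b. snd a y * snd b z * K y z)"

definition kdist2 :: "('a \<Rightarrow> 'a \<Rightarrow> real) \<Rightarrow> 'a set \<times> ('a \<Rightarrow> real) \<Rightarrow> 'a set \<times> ('a \<Rightarrow> real) \<Rightarrow> real" where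
  "kdist2 K a b = kip K a a - 2 * kip K a b + kip K b b"

text \<open>A sequence of finite combinations (supported in S) that is Cauchy in the
  pre-Hilbert norm and converges pointwise to h: it represents h as an element
  of the completion H(K^(S)).\<close>
definition approx_seq :: "('a \<Rightarrow> 'a \<Rightarrow> real) \<Rightarrow> 'a set \<Rightarrow> ('a \<Rightarrow> real) \<Rightarrow> (nat \<Rightarrow> 'a set \<times> ('a \<Rightarrow> real)) \<Rightarrow> bool" where
  "approx_seq K S h a \<longleftrightarrow>
     (\<forall>n. finite (fst (a n)) \<and> fst (a n) \<subseteq> S) \<and>
     (\<forall>e>0. \<exists>N. \<forall>m\<ge>N. \<forall>n\<ge>N. kdist2 K (a m) (a n) < e) \<and>
     (\<forall>x. (\<lambda>n. kfun K S (a n) x) \<longlonglongrightarrow> h x)"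

definition rkhs :: "('a \<Rightarrow> 'a \<Rightarrow> real) \<Rightarrow> 'a set \<Rightarrow> ('a \<Rightarrow> real) set" where
  "rkhs K S = {h. \<exists>a. approx_seq K S h a}"

definition rkhs_inner :: "('a \<Rightarrow> 'a \<Rightarrow> real) \<Rightarrow> 'a set \<Rightarrow> ('a \<Rightarrow> real) \<Rightarrow> ('a \<Rightarrow> real) \<Rightarrow> real" where
  "rkhs_inner K S h g = (THE r. \<forall>a b. approx_seq K S h a \<longrightarrow> approx_seq K S g b \<longrightarrow>
                                   (\<lambda>n. kip K (a n) (b n)) \<longlonglongrightarrow> r)"

definition kcol :: "('a \<Rightarrow> 'a \<Rightarrow> real) \<Rightarrow> 'a set \<Rightarrow> 'a \<Rightarrow> 'a \<Rightarrow> real" where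
  "kcol K S y = (\<lambda>x. if x \<in> S then K x y else 0)"

definition kspan :: "('a \<Rightarrow> 'a \<Rightarrow> real) \<Rightarrow> 'a set \<Rightarrow> 'a set \<Rightarrow> ('a \<Rightarrow> real) set" where
  "kspan K S F = {kfun K S (F, c) | c. True}"

definition proj :: "('a \<Rightarrow> 'a \<Rightarrow> real) \<Rightarrow> 'a set \<Rightarrow> 'a set \<Rightarrow> ('a \<Rightarrow> real) \<Rightarrow> ('a \<Rightarrow> real)" where
  "proj K S F h = (THE g. g \<in> kspan K S F \<and>
      (\<forall>y\<in>F. rkhs_inner K S (\<lambda>x. h x - g x) (kcol K S y) = 0))"

definition delta :: "'a \<Rightarrow> 'a \<Rightarrow> real" where
  "delta x = (\<lambda>y. if y = x then 1 else 0)"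

definition laplacian :: "('a \<Rightarrow> 'a \<Rightarrow> real) \<Rightarrow> 'a set \<Rightarrow> ('a \<Rightarrow> real) \<Rightarrow> 'a \<Rightarrow> real" where
  "laplacian K S h = (\<lambda>x. if x \<in> S then rkhs_inner K S (delta x) h else 0)"

definition kmat_inv_apply :: "('a \<Rightarrow> 'a \<Rightarrow> real) \<Rightarrow> 'a set \<Rightarrow> ('a \<Rightarrow> real) \<Rightarrow> 'a \<Rightarrow> real" where
  "kmat_inv_apply K F v = (THE u. (\<forall>x. x \<notin> F \<longrightarrow> u x = 0) \<and>
      (\<forall>x\<in>F. (\<Sum>y\<in>F. K x y * u y) = v x))"

end

theory Submission
  imports Defs
begin

(* Finite combinations \<Sum> c_y K(., y) with the form kip make up a pre-Hilbert space, and an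
   element h of H(K^(S)) is represented by a kip-Cauchy sequence of combinations converging
   pointwise to h; by Cauchy-Schwarz the limit of inner products does not depend on the
   representatives. Pairing a representative of h with K(., y) gives <h, K(., y)> = h(y), and
   pairing a representative of delta_x with a combination gives <delta_x, \<Sum> c_y K(., y)> = c_x.
   The second identity shows that K_F c = 0 forces c = 0, so K_F is invertible; the first shows
   that P_F h = \<Sum> c_y K(., y) with c = K_F^{-1}(h|_F), hence Delta P_F h = c on F, which is
   (2) and (3). Finally <h|_F, K_F^{-1}(h|_F)> = ||P_F h||^2 <= ||h||^2, with near equality when
   F is the support of a late member of a representing sequence of h. *)

section \<open>Finite kernel combinations\<close>

definition comb_coeff :: "'a set \<times> ('a \<Rightarrow> real) \<Rightarrow> 'a \<Rightarrow> real" where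
  "comb_coeff a y = (if y \<in> fst a then snd a y else 0)"

definition comb_diff :: "'a set \<times> ('a \<Rightarrow> real) \<Rightarrow> 'a set \<times> ('a \<Rightarrow> real) \<Rightarrow> 'a set \<times> ('a \<Rightarrow> real)" where
  "comb_diff a b = (fst a \<union> fst b, \<lambda>y. comb_coeff a y - comb_coeff b y)"

definition comb_scale :: "real \<Rightarrow> 'a set \<times> ('a \<Rightarrow> real) \<Rightarrow> 'a set \<times> ('a \<Rightarrow> real)" where
  "comb_scale t a = (fst a, \<lambda>y. t * snd a y)"

definition comb_norm :: "('a \<Rightarrow> 'a \<Rightarrow> real) \<Rightarrow> 'a set \<times> ('a \<Rightarrow> real) \<Rightarrow> real" where
  "comb_norm K a = sqrt (kip K a a)"

lemma fst_comb_diff [simp]: "fst (comb_diff a b) = fst a \<union> fst b"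
  by (simp add: comb_diff_def)

lemma fst_comb_scale [simp]: "fst (comb_scale t a) = fst a"
  by (simp add: comb_scale_def)

lemma comb_coeff_comb_diff [simp]: "comb_coeff (comb_diff a b) = (\<lambda>y. comb_coeff a y - comb_coeff b y)"
  by (simp add: comb_coeff_def comb_diff_def fun_eq_iff)

lemma pos_def_kernel_commute: "pos_def_kernel K \<Longrightarrow> K x y = K y x"
  by (simp add: pos_def_kernel_def)

lemma kip_self_nonneg: "pos_def_kernel K \<Longrightarrow> finite (fst a) \<Longrightarrow> 0 \<le> kip K a a"
  unfolding pos_def_kernel_def kip_def by blast

lemma kip_commute: "pos_def_kernel K \<Longrightarrow> kip K a b = kip K b a"
  unfolding kip_def by (subst sum.swap) (auto intro!: sum.cong simp: pos_def_kernel_commute)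

lemma kip_eq_sum_left: "kip K a b = (\<Sum>y\<in>fst a. snd a y * (\<Sum>z\<in>fst b. snd b z * K y z))"
  unfolding kip_def by (simp add: sum_distrib_left mult.assoc)

lemma sum_comb_coeff:
  assumes "finite V" "fst a \<subseteq> V"
  shows "(\<Sum>y\<in>V. comb_coeff a y * f y) = (\<Sum>y\<in>fst a. snd a y * f y)"
proof -
  have "(\<Sum>y\<in>V. comb_coeff a y * f y) = (\<Sum>y\<in>V. if y \<in> fst a then snd a y * f y else 0)"
    by (rule sum.cong) (auto simp: comb_coeff_def)
  also have "\<dots> = (\<Sum>y\<in>fst a. snd a y * f y)"
    using assms by (simp add: sum.inter_restrict[symmetric] Int_absorb1 Int_absorb2)
  finally show ?thesis .
qed

lemma kip_eq_sum_comb_coeff: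
  "finite V \<Longrightarrow> fst a \<subseteq> V \<Longrightarrow> fst b \<subseteq> V \<Longrightarrow>
   kip K a b = (\<Sum>y\<in>V. comb_coeff a y * (\<Sum>z\<in>V. comb_coeff b z * K y z))"
  by (simp add: kip_eq_sum_left sum_comb_coeff)

lemma kip_cong_comb_coeff:
  assumes "finite (fst a)" "finite (fst b)" "finite (fst a')" "finite (fst b')"
    and "comb_coeff a = comb_coeff a'" "comb_coeff b = comb_coeff b'"
  shows "kip K a b = kip K a' b'"
proof -
  let ?V = "fst a \<union> fst b \<union> fst a' \<union> fst b'"
  have "kip K a b = (\<Sum>y\<in>?V. comb_coeff a y * (\<Sum>z\<in>?V. comb_coeff b z * K y z))"
    using assms by (intro kip_eq_sum_comb_coeff) auto
  also have "\<dots> = kip K a' b'"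
    using assms by (subst kip_eq_sum_comb_coeff[of ?V]) auto
  finally show ?thesis .
qed

lemma kip_diff_left:
  "finite (fst a) \<Longrightarrow> finite (fst b) \<Longrightarrow> kip K (comb_diff a b) c = kip K a c - kip K b c"
  by (simp add: kip_eq_sum_left comb_diff_def left_diff_distrib sum_subtractf sum_comb_coeff)

lemma kip_diff_right:
  "pos_def_kernel K \<Longrightarrow> finite (fst a) \<Longrightarrow> finite (fst b) \<Longrightarrow>
   kip K c (comb_diff a b) = kip K c a - kip K c b"
  by (metis kip_diff_left kip_commute)

lemma kip_scale_left: "kip K (comb_scale t a) b = t * kip K a b"
  by (simp add: kip_eq_sum_left comb_scale_def sum_distrib_left mult.assoc)

lemma kip_scale_right: "pos_def_kernel K \<Longrightarrow> kip K b (comb_scale t a) = t * kip K b a"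
  by (metis kip_scale_left kip_commute)

lemma kdist2_eq_kip_diff:
  "pos_def_kernel K \<Longrightarrow> finite (fst a) \<Longrightarrow> finite (fst b) \<Longrightarrow>
   kdist2 K a b = kip K (comb_diff a b) (comb_diff a b)"
  by (simp add: kdist2_def kip_diff_left kip_diff_right kip_commute[of K b a])

lemma kdist2_nonneg:
  "pos_def_kernel K \<Longrightarrow> finite (fst a) \<Longrightarrow> finite (fst b) \<Longrightarrow> 0 \<le> kdist2 K a b"
  by (simp add: kdist2_eq_kip_diff kip_self_nonneg)

lemma comb_norm_nonneg: "pos_def_kernel K \<Longrightarrow> finite (fst a) \<Longrightarrow> 0 \<le> comb_norm K a"
  by (simp add: comb_norm_def kip_self_nonneg)

lemma comb_norm_diff:
  "pos_def_kernel K \<Longrightarrow> finite (fst a) \<Longrightarrow> finite (fst b) \<Longrightarrow>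
   comb_norm K (comb_diff a b) = sqrt (kdist2 K a b)"
  by (simp add: comb_norm_def kdist2_eq_kip_diff)

lemma discriminant_le_of_nonneg:
  fixes A B C :: real
  assumes nonneg: "\<And>t. 0 \<le> A - 2 * t * C + t\<^sup>2 * B" and "0 \<le> B"
  shows "C\<^sup>2 \<le> A * B"
proof (cases "B = 0")
  case True
  show ?thesis
  proof (cases "C = 0")
    case False
    have "0 \<le> A - 2 * ((A + 1) / (2 * C)) * C + ((A + 1) / (2 * C))\<^sup>2 * B"
      by (rule nonneg)
    then show ?thesis using False True by (simp add: field_simps)
  qed (simp add: True)
next
  case False
  with \<open>0 \<le> B\<close> have "B > 0" by simp
  have "0 \<le> A - 2 * (C / B) * C + (C / B)\<^sup>2 * B" by (rule nonneg)
  also have "\<dots> = A - C\<^sup>2 / B" using \<open>B > 0\<close> by (simp add: field_simps power2_eq_square)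
  finally show ?thesis using \<open>B > 0\<close> by (simp add: field_simps mult.commute)
qed

lemma kip_Cauchy_Schwarz:
  assumes pd: "pos_def_kernel K" and fin: "finite (fst a)" "finite (fst b)"
  shows "\<bar>kip K a b\<bar> \<le> comb_norm K a * comb_norm K b"
proof -
  have "0 \<le> kip K a a - 2 * t * kip K a b + t\<^sup>2 * kip K b b" for t
  proof -
    have "0 \<le> kip K (comb_diff a (comb_scale t b)) (comb_diff a (comb_scale t b))"
      using pd fin by (intro kip_self_nonneg) auto
    also have "\<dots> = kip K a a - 2 * t * kip K a b + t\<^sup>2 * kip K b b"
      using pd fin by (simp add: kip_diff_left kip_diff_right kip_scale_left kip_scale_right
          kip_commute[of K b a] power2_eq_square algebra_simps)
    finally show ?thesis .
  qed
  then have "(kip K a b)\<^sup>2 \<le> kip K a a * kip K b b"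
    using discriminant_le_of_nonneg kip_self_nonneg[OF pd fin(2)] by blast
  then have "sqrt ((kip K a b)\<^sup>2) \<le> sqrt (kip K a a * kip K b b)"
    by (rule real_sqrt_le_mono)
  then show ?thesis by (simp add: comb_norm_def real_sqrt_mult)
qed

lemma comb_norm_triangle:
  assumes pd: "pos_def_kernel K" and fin: "finite (fst a)" "finite (fst b)"
  shows "comb_norm K (comb_diff a b) \<le> comb_norm K a + comb_norm K b"
    and "\<bar>comb_norm K a - comb_norm K b\<bar> \<le> comb_norm K (comb_diff a b)"
proof -
  let ?na = "comb_norm K a" and ?nb = "comb_norm K b"
  have sq: "(comb_norm K (comb_diff a b))\<^sup>2 = ?na\<^sup>2 - 2 * kip K a b + ?nb\<^sup>2"
    using pd fin kip_self_nonneg[OF pd fin(1)] kip_self_nonneg[OF pd fin(2)]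
      kip_self_nonneg[of K "comb_diff a b"]
    by (simp add: comb_norm_def kip_diff_left kip_diff_right kip_commute[of K b a])
  have cs: "\<bar>kip K a b\<bar> \<le> ?na * ?nb" by (rule kip_Cauchy_Schwarz[OF pd fin])
  have "(comb_norm K (comb_diff a b))\<^sup>2 \<le> (?na + ?nb)\<^sup>2"
    using sq cs by (simp add: power2_eq_square algebra_simps abs_le_iff)
  then show "comb_norm K (comb_diff a b) \<le> ?na + ?nb"
    by (rule power2_le_imp_le) (simp add: comb_norm_nonneg pd fin add_nonneg_nonneg)
  have "\<bar>?na - ?nb\<bar>\<^sup>2 \<le> (comb_norm K (comb_diff a b))\<^sup>2"
    using sq cs by (simp add: power2_eq_square algebra_simps abs_le_iff)
  then show "\<bar>?na - ?nb\<bar> \<le> comb_norm K (comb_diff a b)"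
    by (rule power2_le_imp_le) (simp add: comb_norm_nonneg pd fin)
qed

lemma kdist2_comb_diff_le:
  assumes pd: "pos_def_kernel K"
    and fin: "finite (fst a)" "finite (fst b)" "finite (fst c)" "finite (fst d)"
  shows "sqrt (kdist2 K (comb_diff a b) (comb_diff c d)) \<le> sqrt (kdist2 K a c) + sqrt (kdist2 K b d)"
proof -
  let ?ab_cd = "comb_diff (comb_diff a b) (comb_diff c d)"
    and ?ac_bd = "comb_diff (comb_diff a c) (comb_diff b d)"
  have "kip K ?ab_cd ?ab_cd = kip K ?ac_bd ?ac_bd"
    using fin by (intro kip_cong_comb_coeff) (auto simp: fun_eq_iff)
  then have "sqrt (kdist2 K (comb_diff a b) (comb_diff c d)) = comb_norm K ?ac_bd"
    using pd fin by (simp add: kdist2_eq_kip_diff comb_norm_def)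
  also have "\<dots> \<le> comb_norm K (comb_diff a c) + comb_norm K (comb_diff b d)"
    using pd fin by (intro comb_norm_triangle) auto
  finally show ?thesis using pd fin by (simp add: comb_norm_diff)
qed

lemma kfun_diff:
  "finite (fst a) \<Longrightarrow> finite (fst b) \<Longrightarrow> kfun K S (comb_diff a b) x = kfun K S a x - kfun K S b x"
  by (simp add: kfun_def comb_diff_def left_diff_distrib sum_subtractf sum_comb_coeff)

lemma kip_eq_sum_kfun:
  "pos_def_kernel K \<Longrightarrow> fst b \<subseteq> S \<Longrightarrow> kip K a b = (\<Sum>z\<in>fst b. snd b z * kfun K S a z)"
  by (subst kip_commute) (auto simp: kip_eq_sum_left kfun_def intro!: sum.cong)

lemma kfun_in_support:
  "F \<subseteq> S \<Longrightarrow> y \<in> F \<Longrightarrow> kfun K S (F, c) y = (\<Sum>z\<in>F. K y z * c z)"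
  by (auto simp: kfun_def mult.commute)

section \<open>Approximating sequences and the inner product\<close>

lemma approx_seq_finite:
  "approx_seq K S h a \<Longrightarrow> finite (fst (a n))"
  and approx_seq_subset: "approx_seq K S h a \<Longrightarrow> fst (a n) \<subseteq> S"
  and approx_seq_tendsto: "approx_seq K S h a \<Longrightarrow> (\<lambda>n. kfun K S (a n) x) \<longlonglongrightarrow> h x"
  and approx_seq_Cauchy: "approx_seq K S h a \<Longrightarrow> e > 0 \<Longrightarrow>
    \<exists>N. \<forall>m\<ge>N. \<forall>n\<ge>N. kdist2 K (a m) (a n) < e"
  by (simp_all add: approx_seq_def)

lemma approx_seq_const:
  "finite (fst p) \<Longrightarrow> fst p \<subseteq> S \<Longrightarrow> approx_seq K S (kfun K S p) (\<lambda>n. p)"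
  unfolding approx_seq_def kdist2_def by auto

lemma approx_seq_diff:
  assumes pd: "pos_def_kernel K" and a: "approx_seq K S h a" and b: "approx_seq K S g b"
  shows "approx_seq K S (\<lambda>x. h x - g x) (\<lambda>n. comb_diff (a n) (b n))"
proof -
  note fin = approx_seq_finite[OF a] approx_seq_finite[OF b]
  have "\<exists>N. \<forall>m\<ge>N. \<forall>n\<ge>N. kdist2 K (comb_diff (a m) (b m)) (comb_diff (a n) (b n)) < e"
    if "e > 0" for e
  proof -
    define d where "d = sqrt e / 2"
    have "d > 0" using \<open>e > 0\<close> by (simp add: d_def)
    obtain Na Nb where
      Na: "\<forall>m\<ge>Na. \<forall>n\<ge>Na. kdist2 K (a m) (a n) < d\<^sup>2" and
      Nb: "\<forall>m\<ge>Nb. \<forall>n\<ge>Nb. kdist2 K (b m) (b n) < d\<^sup>2"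
      using approx_seq_Cauchy[OF a, of "d\<^sup>2"] approx_seq_Cauchy[OF b, of "d\<^sup>2"] \<open>d > 0\<close>
      by auto
    define N where "N = max Na Nb"
    have "kdist2 K (comb_diff (a m) (b m)) (comb_diff (a n) (b n)) < e" if "m \<ge> N" "n \<ge> N" for m n
    proof -
      have "sqrt (kdist2 K (a m) (a n)) < d" "sqrt (kdist2 K (b m) (b n)) < d"
        using Na Nb that \<open>d > 0\<close> by (simp_all add: N_def real_less_lsqrt)
      with kdist2_comb_diff_le[OF pd fin(1,2)[of m] fin(1,2)[of n]]
      have "sqrt (kdist2 K (comb_diff (a m) (b m)) (comb_diff (a n) (b n))) < sqrt e"
        unfolding d_def by linarith
      then show ?thesis by simp
    qed
    then show ?thesis by blast
  qed
  moreover have "(\<lambda>n. kfun K S (comb_diff (a n) (b n)) x) \<longlonglongrightarrow> h x - g x" for x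
    using tendsto_diff[OF approx_seq_tendsto[OF a] approx_seq_tendsto[OF b]] by (simp add: kfun_diff fin)
  ultimately show ?thesis
    using approx_seq_subset[OF a] approx_seq_subset[OF b] fin by (auto simp: approx_seq_def)
qed

lemma kip_approx_seq_tendsto:
  assumes pd: "pos_def_kernel K" and a: "approx_seq K S h a" and "fst b \<subseteq> S"
  shows "(\<lambda>n. kip K (a n) b) \<longlonglongrightarrow> (\<Sum>z\<in>fst b. snd b z * h z)"
  unfolding kip_eq_sum_kfun[OF pd \<open>fst b \<subseteq> S\<close>]
  by (intro tendsto_sum tendsto_mult_left approx_seq_tendsto[OF a])

lemma convergent_comb_norm:
  assumes pd: "pos_def_kernel K" and a: "approx_seq K S h a"
  shows "convergent (\<lambda>n. comb_norm K (a n))"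
proof (rule Cauchy_convergent, rule metric_CauchyI)
  fix e :: real assume "0 < e"
  obtain N where N: "\<forall>m\<ge>N. \<forall>n\<ge>N. kdist2 K (a m) (a n) < e\<^sup>2"
    using approx_seq_Cauchy[OF a, of "e\<^sup>2"] \<open>0 < e\<close> by auto
  have "dist (comb_norm K (a m)) (comb_norm K (a n)) < e" if "m \<ge> N" "n \<ge> N" for m n
  proof -
    note fin = approx_seq_finite[OF a, of m] approx_seq_finite[OF a, of n]
    have "dist (comb_norm K (a m)) (comb_norm K (a n)) \<le> sqrt (kdist2 K (a m) (a n))"
      using comb_norm_triangle(2)[OF pd fin] by (simp add: dist_real_def comb_norm_diff[OF pd fin])
    also have "\<dots> < e"
      using N that \<open>0 < e\<close> by (simp add: real_less_lsqrt)
    finally show ?thesis .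
  qed
  then show "\<exists>M. \<forall>m\<ge>M. \<forall>n\<ge>M. dist (comb_norm K (a m)) (comb_norm K (a n)) < e" by blast
qed

lemma comb_norm_bounded:
  assumes pd: "pos_def_kernel K" and a: "approx_seq K S h a"
  obtains M where "M > 0" "\<And>n. comb_norm K (a n) \<le> M"
proof -
  have "Bseq (\<lambda>n. comb_norm K (a n))"
    using convergent_comb_norm[OF pd a] by (rule convergent_imp_Bseq)
  then obtain M where "M > 0" and M: "\<And>n. norm (comb_norm K (a n)) \<le> M" by (auto elim: BseqE)
  have "comb_norm K (a n) \<le> M" for n using M[of n] by simp
  with \<open>M > 0\<close> show ?thesis by (rule that)
qed

lemma kip_self_tendsto_0_if_approx_seq_zero:
  assumes pd: "pos_def_kernel K" and D: "approx_seq K S (\<lambda>_. 0) D"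
  shows "(\<lambda>n. kip K (D n) (D n)) \<longlonglongrightarrow> 0"
proof (rule LIMSEQ_I)
  fix e :: real assume "0 < e"
  note fin = approx_seq_finite[OF D]
  obtain M where "M > 0" and M: "\<And>n. comb_norm K (D n) \<le> M"
    using comb_norm_bounded[OF pd D] by blast
  define d where "d = e / (2 * M)"
  have "d > 0" using \<open>0 < e\<close> \<open>M > 0\<close> by (simp add: d_def)
  obtain N where N: "\<forall>m\<ge>N. \<forall>n\<ge>N. kdist2 K (D m) (D n) < d\<^sup>2"
    using approx_seq_Cauchy[OF D, of "d\<^sup>2"] \<open>d > 0\<close> by auto
  have "(\<lambda>n. kip K (D n) (D N)) \<longlonglongrightarrow> 0"
    using kip_approx_seq_tendsto[OF pd D approx_seq_subset[OF D]] by simp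
  then obtain N' where N': "\<forall>n\<ge>N'. \<bar>kip K (D n) (D N)\<bar> < e / 2"
    using LIMSEQ_D[of _ 0 "e / 2"] \<open>0 < e\<close> by force
  have "norm (kip K (D n) (D n) - 0) < e" if "n \<ge> max N N'" for n
  proof -
    \<comment> \<open>Split off the fixed tail element D N: it is weakly null, and D n - D N is small.\<close>
    have split: "kip K (D n) (D n) = kip K (D n) (comb_diff (D n) (D N)) + kip K (D n) (D N)"
      by (simp add: kip_diff_right[OF pd fin fin])
    have "\<bar>kip K (D n) (comb_diff (D n) (D N))\<bar> \<le> M * d"
    proof -
      have "\<bar>kip K (D n) (comb_diff (D n) (D N))\<bar> \<le> comb_norm K (D n) * sqrt (kdist2 K (D n) (D N))"
        using kip_Cauchy_Schwarz[OF pd, of "D n" "comb_diff (D n) (D N)"] fin[of n] fin[of N]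
        by (simp add: comb_norm_diff[OF pd fin fin])
      also have "\<dots> \<le> M * d"
        using M[of n] N that \<open>d > 0\<close> \<open>M > 0\<close> comb_norm_nonneg[OF pd fin]
          kdist2_nonneg[OF pd fin fin]
        by (intro mult_mono) (simp_all add: real_less_lsqrt less_imp_le)
      finally show ?thesis .
    qed
    moreover have "M * d = e / 2" using \<open>M > 0\<close> by (simp add: d_def)
    moreover have "\<bar>kip K (D n) (D N)\<bar> < e / 2" using N' that by simp
    ultimately show ?thesis using split by simp
  qed
  then show "\<exists>N. \<forall>n\<ge>N. norm (kip K (D n) (D n) - 0) < e" by blast
qed

lemma kdist2_approx_seqs_tendsto_0:
  assumes pd: "pos_def_kernel K" and a: "approx_seq K S h a" and b: "approx_seq K S h b"
  shows "(\<lambda>n. kdist2 K (a n) (b n)) \<longlonglongrightarrow> 0"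
proof -
  have "approx_seq K S (\<lambda>_. 0) (\<lambda>n. comb_diff (a n) (b n))"
    using approx_seq_diff[OF pd a b] by simp
  then show ?thesis
    using kip_self_tendsto_0_if_approx_seq_zero[OF pd]
    by (simp add: kdist2_eq_kip_diff pd approx_seq_finite[OF a] approx_seq_finite[OF b])
qed

lemma kip_approx_seqs_diff_tendsto_0:
  assumes pd: "pos_def_kernel K"
    and a: "approx_seq K S h a" and a': "approx_seq K S h a'"
    and b: "approx_seq K S g b" and b': "approx_seq K S g b'"
  shows "(\<lambda>n. kip K (a n) (b n) - kip K (a' n) (b' n)) \<longlonglongrightarrow> 0"
proof (rule Lim_null_comparison)
  note fin = approx_seq_finite[OF a] approx_seq_finite[OF a']
    approx_seq_finite[OF b] approx_seq_finite[OF b']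
  let ?bound = "\<lambda>n. sqrt (kdist2 K (a n) (a' n)) * comb_norm K (b n)
                   + comb_norm K (a' n) * sqrt (kdist2 K (b n) (b' n))"
  have "norm (kip K (a n) (b n) - kip K (a' n) (b' n)) \<le> ?bound n" for n
  proof -
    have "kip K (a n) (b n) - kip K (a' n) (b' n)
        = kip K (comb_diff (a n) (a' n)) (b n) + kip K (a' n) (comb_diff (b n) (b' n))"
      by (simp add: kip_diff_left kip_diff_right pd fin)
    moreover have "\<bar>kip K (comb_diff (a n) (a' n)) (b n)\<bar>
        \<le> sqrt (kdist2 K (a n) (a' n)) * comb_norm K (b n)"
      using kip_Cauchy_Schwarz[OF pd, of "comb_diff (a n) (a' n)" "b n"] fin
      by (simp add: comb_norm_diff[OF pd])
    moreover have "\<bar>kip K (a' n) (comb_diff (b n) (b' n))\<bar>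
        \<le> comb_norm K (a' n) * sqrt (kdist2 K (b n) (b' n))"
      using kip_Cauchy_Schwarz[OF pd, of "a' n" "comb_diff (b n) (b' n)"] fin
      by (simp add: comb_norm_diff[OF pd])
    ultimately show ?thesis by simp
  qed
  then show "\<forall>\<^sub>F n in sequentially. norm (kip K (a n) (b n) - kip K (a' n) (b' n)) \<le> ?bound n"
    by simp
  obtain Lb La where "(\<lambda>n. comb_norm K (b n)) \<longlonglongrightarrow> Lb" "(\<lambda>n. comb_norm K (a' n)) \<longlonglongrightarrow> La"
    using convergent_comb_norm[OF pd b] convergent_comb_norm[OF pd a'] by (auto simp: convergent_def)
  moreover note tendsto_real_sqrt[OF kdist2_approx_seqs_tendsto_0[OF pd a a']]
    tendsto_real_sqrt[OF kdist2_approx_seqs_tendsto_0[OF pd b b']]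
  ultimately have "?bound \<longlonglongrightarrow> 0 * Lb + La * 0"
    by (intro tendsto_add tendsto_mult) simp_all
  then show "?bound \<longlonglongrightarrow> 0" by simp
qed

lemma rkhs_inner_eqI:
  assumes pd: "pos_def_kernel K" and a: "approx_seq K S h a" and b: "approx_seq K S g b"
    and lim: "(\<lambda>n. kip K (a n) (b n)) \<longlonglongrightarrow> r"
  shows "rkhs_inner K S h g = r"
  unfolding rkhs_inner_def
proof (rule the_equality)
  show "\<forall>a' b'. approx_seq K S h a' \<longrightarrow> approx_seq K S g b' \<longrightarrow> (\<lambda>n. kip K (a' n) (b' n)) \<longlonglongrightarrow> r"
  proof (intro allI impI)
    fix a' b' assume a': "approx_seq K S h a'" and b': "approx_seq K S g b'"
    have "(\<lambda>n. kip K (a n) (b n) - (kip K (a n) (b n) - kip K (a' n) (b' n))) \<longlonglongrightarrow> r - 0"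
      by (intro tendsto_diff lim kip_approx_seqs_diff_tendsto_0[OF pd a a' b b'])
    then show "(\<lambda>n. kip K (a' n) (b' n)) \<longlonglongrightarrow> r" by simp
  qed
next
  fix r' assume "\<forall>a' b'. approx_seq K S h a' \<longrightarrow> approx_seq K S g b' \<longrightarrow>
    (\<lambda>n. kip K (a' n) (b' n)) \<longlonglongrightarrow> r'"
  then have "(\<lambda>n. kip K (a n) (b n)) \<longlonglongrightarrow> r'" using a b by blast
  then show "r' = r" using lim by (rule LIMSEQ_unique)
qed

lemma kip_self_tendsto_rkhs_inner:
  assumes pd: "pos_def_kernel K" and a: "approx_seq K S h a"
  shows "(\<lambda>n. kip K (a n) (a n)) \<longlonglongrightarrow> rkhs_inner K S h h"
proof -
  obtain L where "(\<lambda>n. comb_norm K (a n)) \<longlonglongrightarrow> L"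
    using convergent_comb_norm[OF pd a] by (auto simp: convergent_def)
  then have "(\<lambda>n. (comb_norm K (a n))\<^sup>2) \<longlonglongrightarrow> L\<^sup>2" by (rule tendsto_power)
  moreover have "(comb_norm K (a n))\<^sup>2 = kip K (a n) (a n)" for n
    by (simp add: comb_norm_def kip_self_nonneg pd approx_seq_finite[OF a])
  ultimately have "(\<lambda>n. kip K (a n) (a n)) \<longlonglongrightarrow> L\<^sup>2" by simp
  moreover from this have "rkhs_inner K S h h = L\<^sup>2" by (rule rkhs_inner_eqI[OF pd a a])
  ultimately show ?thesis by simp
qed

lemma rkhs_inner_kcol:
  assumes pd: "pos_def_kernel K" and a: "approx_seq K S g a" and "y \<in> S"
  shows "rkhs_inner K S g (kcol K S y) = g y"
proof -
  have "kcol K S y = kfun K S ({y}, \<lambda>_. 1)"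
    by (simp add: kcol_def kfun_def fun_eq_iff)
  then have "approx_seq K S (kcol K S y) (\<lambda>n. ({y}, \<lambda>_. 1))"
    using \<open>y \<in> S\<close> by (simp add: approx_seq_const)
  moreover have "(\<lambda>n. kip K (a n) ({y}, \<lambda>_. 1)) \<longlonglongrightarrow> g y"
    using kip_approx_seq_tendsto[OF pd a, of "({y}, \<lambda>_. 1)"] \<open>y \<in> S\<close> by simp
  ultimately show ?thesis by (rule rkhs_inner_eqI[OF pd a])
qed

section \<open>Invertibility of the kernel matrices\<close>

lemma kip_approx_delta_tendsto:
  assumes pd: "pos_def_kernel K" and a: "approx_seq K S (delta x) a"
    and "finite F" "F \<subseteq> S" "x \<in> F"
  shows "(\<lambda>n. kip K (a n) (F, c)) \<longlonglongrightarrow> c x"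
  using kip_approx_seq_tendsto[OF pd a, of "(F, c)"] assms(3-5)
  by (simp add: delta_def if_distrib[of "\<lambda>t. c _ * t"] cong: if_cong)

lemma kernel_matrix_injective:
  assumes pd: "pos_def_kernel K" and deltas: "\<forall>x\<in>S. delta x \<in> rkhs K S"
    and F: "finite F" "F \<subseteq> S" and zero: "\<forall>y\<in>F. (\<Sum>z\<in>F. K y z * d z) = 0" and "x \<in> F"
  shows "d x = 0"
proof -
  obtain a where a: "approx_seq K S (delta x) a"
    using deltas \<open>x \<in> F\<close> F unfolding rkhs_def by blast
  have "kfun K S (F, d) z = 0" if "z \<in> F" for z
    using zero that F by (simp add: kfun_in_support)
  then have "comb_norm K (F, d) = 0"
    using kip_eq_sum_kfun[OF pd, of "(F, d)" S "(F, d)"] F by (simp add: comb_norm_def)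
  then have "kip K (a n) (F, d) = 0" for n
    using kip_Cauchy_Schwarz[OF pd, of "a n" "(F, d)"] approx_seq_finite[OF a, of n] F by simp
  then have "(\<lambda>n. kip K (a n) (F, d)) \<longlonglongrightarrow> 0" by simp
  with kip_approx_delta_tendsto[OF pd a F \<open>x \<in> F\<close>, of d] show "d x = 0"
    by (rule LIMSEQ_unique)
qed

lemma sum_insert_if:
  assumes "finite F" "a \<notin> F"
  shows "(\<Sum>z\<in>insert a F. f z * (if z = a then \<alpha> else g z)) = f a * \<alpha> + (\<Sum>z\<in>F. f z * g z)"
proof -
  have "(\<Sum>z\<in>F. f z * (if z = a then \<alpha> else g z)) = (\<Sum>z\<in>F. f z * g z)"
    using \<open>a \<notin> F\<close> by (intro sum.cong) auto
  with assms show ?thesis by simp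
qed

text \<open>Gaussian elimination on the last index: the Schur complement of the pivot is nonzero
  because the enlarged principal submatrix is injective.\<close>
lemma solvable_if_principal_submatrices_injective:
  fixes M :: "'a \<Rightarrow> 'a \<Rightarrow> real"
  assumes "finite F"
    and inj: "\<And>G d x. G \<subseteq> F \<Longrightarrow> \<forall>y\<in>G. (\<Sum>z\<in>G. M y z * d z) = 0 \<Longrightarrow> x \<in> G \<Longrightarrow> d x = 0"
  shows "\<exists>u. \<forall>y\<in>F. (\<Sum>z\<in>F. M y z * u z) = v y"
  using assms
proof (induction F arbitrary: v rule: finite_induct)
  case empty
  then show ?case by simp
next
  case (insert a F)
  have injF: "\<And>G d x. G \<subseteq> F \<Longrightarrow> \<forall>y\<in>G. (\<Sum>z\<in>G. M y z * d z) = 0 \<Longrightarrow> x \<in> G \<Longrightarrow> d x = 0"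
    using insert.prems by blast
  have solvable: "\<exists>u. \<forall>y\<in>F. (\<Sum>z\<in>F. M y z * u z) = v' y" for v'
    using insert.IH injF by blast
  obtain u0 where u0: "\<forall>y\<in>F. (\<Sum>z\<in>F. M y z * u0 z) = v y"
    using solvable by blast
  obtain w where w: "\<forall>y\<in>F. (\<Sum>z\<in>F. M y z * w z) = M y a"
    using solvable[of "\<lambda>y. M y a"] by blast
  define \<rho> where "\<rho> = M a a - (\<Sum>z\<in>F. M a z * w z)"
  have col: "(\<Sum>z\<in>insert a F. M y z * (if z = a then 1 else - w z)) = M y a - (\<Sum>z\<in>F. M y z * w z)"
    for y by (simp only: sum_insert_if[OF insert.hyps]) (simp add: sum_negf)
  have "\<rho> \<noteq> 0"
  proof
    assume "\<rho> = 0"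
    then have "\<forall>y\<in>insert a F. (\<Sum>z\<in>insert a F. M y z * (if z = a then 1 else - w z)) = 0"
      using col w by (auto simp: \<rho>_def)
    then show False
      using insert.prems[of "insert a F" "\<lambda>z. if z = a then 1 else - w z" a] by simp
  qed
  define t where "t = (v a - (\<Sum>z\<in>F. M a z * u0 z)) / \<rho>"
  define u where "u z = (if z = a then t else u0 z - t * w z)" for z
  have "(\<Sum>z\<in>insert a F. M y z * u z)
      = t * (M y a - (\<Sum>z\<in>F. M y z * w z)) + (\<Sum>z\<in>F. M y z * u0 z)" for y
    unfolding u_def by (simp only: sum_insert_if[OF insert.hyps])
      (simp add: right_diff_distrib sum_subtractf sum_distrib_left algebra_simps)
  then have "\<forall>y\<in>insert a F. (\<Sum>z\<in>insert a F. M y z * u z) = v y"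
    using u0 w \<open>\<rho> \<noteq> 0\<close> by (auto simp: t_def \<rho>_def[symmetric])
  then show ?case by blast
qed

lemma kernel_matrix_solvable:
  assumes pd: "pos_def_kernel K" and deltas: "\<forall>x\<in>S. delta x \<in> rkhs K S"
    and F: "finite F" "F \<subseteq> S"
  shows "\<exists>u. \<forall>y\<in>F. (\<Sum>z\<in>F. K y z * u z) = v y"
proof (rule solvable_if_principal_submatrices_injective[OF \<open>finite F\<close>])
  fix G d x assume "G \<subseteq> F" "\<forall>y\<in>G. (\<Sum>z\<in>G. K y z * d z) = 0" "x \<in> G"
  moreover from \<open>G \<subseteq> F\<close> F have "finite G" "G \<subseteq> S" by (auto intro: finite_subset)
  ultimately show "d x = 0" using kernel_matrix_injective[OF pd deltas] by blast
qed

lemma kmat_inv_apply_solves: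
  assumes pd: "pos_def_kernel K" and deltas: "\<forall>x\<in>S. delta x \<in> rkhs K S"
    and F: "finite F" "F \<subseteq> S" and "x \<in> F"
  shows "(\<Sum>y\<in>F. K x y * kmat_inv_apply K F v y) = v x"
proof -
  let ?sol = "\<lambda>u. (\<forall>x. x \<notin> F \<longrightarrow> u x = 0) \<and> (\<forall>x\<in>F. (\<Sum>y\<in>F. K x y * u y) = v x)"
  obtain u where u: "\<forall>y\<in>F. (\<Sum>z\<in>F. K y z * u z) = v y"
    using kernel_matrix_solvable[OF pd deltas F] by blast
  define u' where "u' x = (if x \<in> F then u x else 0)" for x
  have "?sol u'"
    using u by (auto simp: u'_def cong: sum.cong)
  moreover have "u1 = u'" if "?sol u1" for u1
  proof
    fix x
    have "\<forall>y\<in>F. (\<Sum>z\<in>F. K y z * (u1 z - u' z)) = 0"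
      using that \<open>?sol u'\<close> by (simp add: right_diff_distrib sum_subtractf)
    then show "u1 x = u' x"
      using kernel_matrix_injective[OF pd deltas F, of "\<lambda>z. u1 z - u' z" x] that \<open>?sol u'\<close>
      by (cases "x \<in> F") auto
  qed
  ultimately have "?sol (kmat_inv_apply K F v)"
    unfolding kmat_inv_apply_def by (rule theI)
  with \<open>x \<in> F\<close> show ?thesis by blast
qed

section \<open>Projections and the Laplacian\<close>

lemma proj_eq_kfun_kmat_inv_apply:
  assumes pd: "pos_def_kernel K" and deltas: "\<forall>x\<in>S. delta x \<in> rkhs K S"
    and "h \<in> rkhs K S" and F: "finite F" "F \<subseteq> S"
  shows "proj K S F h = kfun K S (F, kmat_inv_apply K F h)"
proof -
  obtain a where a: "approx_seq K S h a" using \<open>h \<in> rkhs K S\<close> unfolding rkhs_def by blast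
  have residual: "rkhs_inner K S (\<lambda>x. h x - kfun K S (F, c) x) (kcol K S y)
      = h y - (\<Sum>z\<in>F. K y z * c z)" if "y \<in> F" for c y
  proof -
    have "approx_seq K S (\<lambda>x. h x - kfun K S (F, c) x) (\<lambda>n. comb_diff (a n) (F, c))"
      using approx_seq_diff[OF pd a approx_seq_const[of "(F, c)" S K]] F by simp
    then show ?thesis
      using rkhs_inner_kcol[OF pd, of S _ _ y] kfun_in_support[of F S y K c] that F by auto
  qed
  show ?thesis unfolding proj_def
  proof (rule the_equality)
    have "rkhs_inner K S (\<lambda>x. h x - kfun K S (F, kmat_inv_apply K F h) x) (kcol K S y) = 0"
      if "y \<in> F" for y
      using residual[OF that] kmat_inv_apply_solves[OF pd deltas F that, of h] by simp
    then show "kfun K S (F, kmat_inv_apply K F h) \<in> kspan K S F \<and>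
        (\<forall>y\<in>F. rkhs_inner K S (\<lambda>x. h x - kfun K S (F, kmat_inv_apply K F h) x) (kcol K S y) = 0)"
      by (auto simp: kspan_def)
  next
    fix g assume g: "g \<in> kspan K S F \<and> (\<forall>y\<in>F. rkhs_inner K S (\<lambda>x. h x - g x) (kcol K S y) = 0)"
    then obtain c where c: "g = kfun K S (F, c)" by (auto simp: kspan_def)
    have "(\<Sum>z\<in>F. K y z * (c z - kmat_inv_apply K F h z)) = 0" if "y \<in> F" for y
    proof -
      have "(\<Sum>z\<in>F. K y z * c z) = h y"
        using g residual[OF that, of c] that by (simp add: c)
      then show ?thesis
        using kmat_inv_apply_solves[OF pd deltas F that, of h]
        by (simp add: right_diff_distrib sum_subtractf)
    qed
    then have "c z = kmat_inv_apply K F h z" if "z \<in> F" for z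
      using kernel_matrix_injective[OF pd deltas F, of "\<lambda>z. c z - kmat_inv_apply K F h z" z] that
      by simp
    then show "g = kfun K S (F, kmat_inv_apply K F h)"
      by (simp add: c kfun_def fun_eq_iff)
  qed
qed

lemma laplacian_kfun:
  assumes pd: "pos_def_kernel K" and deltas: "\<forall>x\<in>S. delta x \<in> rkhs K S"
    and F: "finite F" "F \<subseteq> S" and "x \<in> F"
  shows "laplacian K S (kfun K S (F, c)) x = c x"
proof -
  obtain a where a: "approx_seq K S (delta x) a"
    using deltas \<open>x \<in> F\<close> F unfolding rkhs_def by blast
  have "approx_seq K S (kfun K S (F, c)) (\<lambda>n. (F, c))"
    using F by (intro approx_seq_const) auto
  then have "rkhs_inner K S (delta x) (kfun K S (F, c)) = c x"
    using rkhs_inner_eqI[OF pd a] kip_approx_delta_tendsto[OF pd a F \<open>x \<in> F\<close>] by blast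
  with \<open>x \<in> F\<close> F show ?thesis by (auto simp: laplacian_def)
qed

section \<open>The norm as a supremum over finite sets\<close>

definition kmat_inv_form :: "('a \<Rightarrow> 'a \<Rightarrow> real) \<Rightarrow> 'a set \<Rightarrow> ('a \<Rightarrow> real) \<Rightarrow> real" where
  "kmat_inv_form K F h = (\<Sum>x\<in>F. h x * kmat_inv_apply K F h x)"

lemma kip_kmat_inv_apply:
  assumes "pos_def_kernel K" "\<forall>x\<in>S. delta x \<in> rkhs K S" "finite F" "F \<subseteq> S" "fst b = F"
  shows "kip K (F, kmat_inv_apply K F h) b = (\<Sum>z\<in>F. snd b z * h z)"
  using assms kip_eq_sum_kfun[of K b S "(F, kmat_inv_apply K F h)"]
  by (auto simp: kfun_in_support kmat_inv_apply_solves intro!: sum.cong)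

lemma kip_self_kmat_inv_apply:
  assumes "pos_def_kernel K" "\<forall>x\<in>S. delta x \<in> rkhs K S" "finite F" "F \<subseteq> S"
  shows "kip K (F, kmat_inv_apply K F h) (F, kmat_inv_apply K F h) = kmat_inv_form K F h"
  using kip_kmat_inv_apply[OF assms] by (simp add: kmat_inv_form_def mult.commute)

lemma kdist2_approx_seq_tendsto:
  assumes pd: "pos_def_kernel K" and a: "approx_seq K S h a" and "fst q \<subseteq> S"
  shows "(\<lambda>n. kdist2 K (a n) q)
    \<longlonglongrightarrow> rkhs_inner K S h h - 2 * (\<Sum>z\<in>fst q. snd q z * h z) + kip K q q"
  unfolding kdist2_def
  by (intro tendsto_intros kip_self_tendsto_rkhs_inner[OF pd a]
      kip_approx_seq_tendsto[OF pd a \<open>fst q \<subseteq> S\<close>])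

lemma kmat_inv_form_le_rkhs_inner:
  assumes pd: "pos_def_kernel K" and deltas: "\<forall>x\<in>S. delta x \<in> rkhs K S"
    and a: "approx_seq K S h a" and F: "finite F" "F \<subseteq> S"
  shows "kmat_inv_form K F h \<le> rkhs_inner K S h h"
proof -
  let ?p = "(F, kmat_inv_apply K F h)"
  have "(\<lambda>n. kdist2 K (a n) ?p)
      \<longlonglongrightarrow> rkhs_inner K S h h - 2 * kmat_inv_form K F h + kmat_inv_form K F h"
    using kdist2_approx_seq_tendsto[OF pd a, of ?p] F
    by (simp add: kip_self_kmat_inv_apply[OF pd deltas F] kmat_inv_form_def mult.commute)
  moreover have "0 \<le> kdist2 K (a n) ?p" for n
    using kdist2_nonneg[OF pd approx_seq_finite[OF a]] F by simp
  ultimately have "0 \<le> rkhs_inner K S h h - 2 * kmat_inv_form K F h + kmat_inv_form K F h"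
    by (intro LIMSEQ_le_const) auto
  then show ?thesis by simp
qed

text \<open>Take for F the support of a late member q of the approximating sequence. As q lies in the
  span of the K(., y), y \<in> F, ||h||^2 - ||P_F h||^2 = ||h - P_F h||^2 <= ||h - q||^2, which is small.\<close>
lemma rkhs_inner_le_kmat_inv_form_add:
  assumes pd: "pos_def_kernel K" and deltas: "\<forall>x\<in>S. delta x \<in> rkhs K S"
    and a: "approx_seq K S h a" and "e > 0"
  obtains F where "finite F" "F \<subseteq> S" "rkhs_inner K S h h - e \<le> kmat_inv_form K F h"
proof -
  obtain N where N: "\<forall>m\<ge>N. \<forall>n\<ge>N. kdist2 K (a m) (a n) < e"
    using approx_seq_Cauchy[OF a \<open>e > 0\<close>] by blast
  define q where "q = a N"
  define F where "F = fst q"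
  have F: "finite F" "F \<subseteq> S"
    using approx_seq_finite[OF a] approx_seq_subset[OF a] by (simp_all add: F_def q_def)
  define \<alpha> where "\<alpha> = (\<Sum>z\<in>F. snd q z * h z)"
  have "(\<lambda>n. kdist2 K (a n) q) \<longlonglongrightarrow> rkhs_inner K S h h - 2 * \<alpha> + kip K q q"
    using kdist2_approx_seq_tendsto[OF pd a, of q] F by (simp add: \<alpha>_def F_def)
  moreover have "\<forall>n\<ge>N. kdist2 K (a n) q \<le> e"
    using N by (auto simp: q_def intro: less_imp_le)
  ultimately have close: "rkhs_inner K S h h - 2 * \<alpha> + kip K q q \<le> e"
    by (intro LIMSEQ_le_const2) auto
  let ?p = "(F, kmat_inv_apply K F h)"
  have "kdist2 K ?p q = kmat_inv_form K F h - 2 * \<alpha> + kip K q q"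
    using kip_self_kmat_inv_apply[OF pd deltas F] kip_kmat_inv_apply[OF pd deltas F, of q]
    by (simp add: kdist2_def \<alpha>_def F_def)
  moreover have "0 \<le> kdist2 K ?p q"
    using kdist2_nonneg[OF pd] F approx_seq_finite[OF a] by (simp add: q_def)
  ultimately have "rkhs_inner K S h h - e \<le> kmat_inv_form K F h"
    using close by simp
  with F show ?thesis by (rule that)
qed

lemma rkhs_inner_self_eq_SUP_kmat_inv_form:
  assumes pd: "pos_def_kernel K" and deltas: "\<forall>x\<in>S. delta x \<in> rkhs K S"
    and "h \<in> rkhs K S"
  shows "rkhs_inner K S h h = (SUP F\<in>{F. finite F \<and> F \<subseteq> S}. kmat_inv_form K F h)"
proof -
  obtain a where a: "approx_seq K S h a" using \<open>h \<in> rkhs K S\<close> unfolding rkhs_def by blast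
  show ?thesis
  proof (rule cSup_eq_non_empty[symmetric])
    show "(\<lambda>F. kmat_inv_form K F h) ` {F. finite F \<and> F \<subseteq> S} \<noteq> {}" by blast
    show "r \<le> rkhs_inner K S h h" if "r \<in> (\<lambda>F. kmat_inv_form K F h) ` {F. finite F \<and> F \<subseteq> S}" for r
      using that kmat_inv_form_le_rkhs_inner[OF pd deltas a] by auto
    show "rkhs_inner K S h h \<le> b"
      if b: "\<And>r. r \<in> (\<lambda>F. kmat_inv_form K F h) ` {F. finite F \<and> F \<subseteq> S} \<Longrightarrow> r \<le> b" for b
    proof (rule field_le_epsilon)
      fix e :: real assume "0 < e"
      then obtain F where "finite F" "F \<subseteq> S" "rkhs_inner K S h h - e \<le> kmat_inv_form K F h"
        using rkhs_inner_le_kmat_inv_form_add[OF pd deltas a] by blast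
      then show "rkhs_inner K S h h \<le> b + e" using b[of "kmat_inv_form K F h"] by auto
    qed
  qed
qed

theorem corollary8p16:
  fixes K :: "'a \<Rightarrow> 'a \<Rightarrow> real" and S :: "'a set" and h :: "'a \<Rightarrow> real"
  assumes "pos_def_kernel K"
    and "countable S"
    and "\<forall>x\<in>S. delta x \<in> rkhs K S"
    and "h \<in> rkhs K S"
  shows "rkhs_inner K S h h =
           (SUP F\<in>{F. finite F \<and> F \<subseteq> S}. \<Sum>x\<in>F. h x * laplacian K S (proj K S F h) x)
       \<and> rkhs_inner K S h h =
           (SUP F\<in>{F. finite F \<and> F \<subseteq> S}. \<Sum>x\<in>F. h x * kmat_inv_apply K F h x)
       \<and> (\<forall>F. finite F \<and> F \<subseteq> S \<longrightarrow>
            (\<forall>x\<in>F. laplacian K S (proj K S F h) x = kmat_inv_apply K F h x))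
       \<and> (\<forall>F. finite F \<and> F \<subseteq> S \<longrightarrow>
            (\<forall>x\<in>F. (\<Sum>y\<in>F. K x y * laplacian K S (proj K S F h) y) = h x))"
proof -
  note pd = assms(1) and deltas = assms(3) and h = assms(4)
  have laplacian_proj: "laplacian K S (proj K S F h) x = kmat_inv_apply K F h x"
    if "finite F" "F \<subseteq> S" "x \<in> F" for F x
    using that by (simp add: proj_eq_kfun_kmat_inv_apply[OF pd deltas h] laplacian_kfun[OF pd deltas])
  have "(\<Sum>x\<in>F. h x * laplacian K S (proj K S F h) x) = kmat_inv_form K F h"
    if "finite F" "F \<subseteq> S" for F
    using that laplacian_proj by (simp add: kmat_inv_form_def)
  then have "(SUP F\<in>{F. finite F \<and> F \<subseteq> S}. \<Sum>x\<in>F. h x * laplacian K S (proj K S F h) x)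
      = (SUP F\<in>{F. finite F \<and> F \<subseteq> S}. kmat_inv_form K F h)"
    by (intro SUP_cong) auto
  moreover have "(\<Sum>y\<in>F. K x y * laplacian K S (proj K S F h) y) = h x"
    if "finite F" "F \<subseteq> S" "x \<in> F" for F x
    using that laplacian_proj kmat_inv_apply_solves[OF pd deltas] by simp
  ultimately show ?thesis
    using rkhs_inner_self_eq_SUP_kmat_inv_form[OF pd deltas h] laplacian_proj
    by (simp add: kmat_inv_form_def)
qed

end
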